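(* For all indices $\mathbf k$ and $\mathbf l$, $\zeta^{t,*}_{\mathrm{shift}}(\mathbf k*\mathbf l;T)=\zeta^{t,*}_{\mathrm{shift}}(\mathbf k;T)\,\zeta^{t,*}_{\mathrm{shift}}(\mathbf l;T)$ in $\mathbb R[T][[t]]$.
   Context: $t,T$ are commuting indeterminates. An index is a finite tuple $\mathbf{k}=(k_1,\dots,k_r)$ of positive integers ($r\ge0$), $\mathrm{dep}(\mathbf k)=r$, $\mathrm{wt}(\mathbf k)=\sum k_i$; $\oplus$ is componentwise sum of tuples of equal length and $b\binom{\mathbf{k}}{\mathbf{l}}=\prod_{i}\binom{k_i+l_i-1}{l_i}$. Admissible: empty or $k_r\ge2$; $\zeta(\mathbf k)=\sum_{0<n_1<\cdots<n_r}n_1^{-k_1}\cdots n_r^{-k_r}$. $\mathfrak H=\mathbb Q\langle e_0,e_1\rangle$, $\mathfrak H^1=\mathbb Q+e_1\mathfrak H$, $\mathfrak H^0=\mathbb Q+e_1\mathfrak He_0$, $e_{\mathbf{k}}=e_1e_0^{k_1-1}\cdots e_1e_0^{k_r-1}$. The harmonic product $*$ on $\mathfrak H^1$: bilinear, $1*w=w*1=w$, $we_{(k)}*w'e_{(l)}=(we_{(k)}*w')e_{(l)}+(w*w'e_{(l)})e_{(k)}-(w*w')e_{(k+l)}$. It is transported to formal $\mathbb Q$-linear combinations of indices via the linear bijection $\mathbf k\mapsto(-1)^{\mathrm{dep}(\mathbf k)}e_{\mathbf k}$, and maps on indices are extended linearly. $Z^*_T:\mathfrak H^1\to\mathbb R[T]$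 is the unique $\mathbb Q$-algebra homomorphism for $*$ with $Z^*_T(e_{\mathbf k})=(-1)^{\mathrm{dep}(\mathbf k)}\zeta(\mathbf k)$ for admissible $\mathbf k$ and $Z^*_T(e_1)=-T$; $\zeta^*(\mathbf k;T)=(-1)^{\mathrm{dep}(\mathbf k)}Z^*_T(e_{\mathbf k})$. $\zeta^{t,*}_{\mathrm{shift}}(\mathbf{k};T)=\sum_{\mathbf n\in\mathbb Z_{\ge0}^{\mathrm{dep}(\mathbf k)}}b\binom{\mathbf k}{\mathbf n}\zeta^{*}(\mathbf k\oplus\mathbf n;T)(-t)^{\mathrm{wt}(\mathbf n)}$. *)

theory Defs
  imports "HOL-Analysis.Analysis" "HOL-Computational_Algebra.Polynomial"
    "HOL-Computational_Algebra.Formal_Power_Series"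
begin

text \<open>Formal Q-linear combinations of
  basis elements are represented as finite lists of (coefficient, index) pairs
  (read as the sum of the terms); maps are always extended linearly.\<close>

definition is_index :: "nat list \<Rightarrow> bool" where
  "is_index k \<longleftrightarrow> (\<forall>x\<in>set k. 0 < x)"

definition admissible :: "nat list \<Rightarrow> bool" where
  "admissible k \<longleftrightarrow> k = [] \<or> 2 \<le> last k"

definition mzv :: "nat list \<Rightarrow> real" where
  "mzv k = (\<Sum>\<^sub>\<infinity> n\<in>{n::nat list. length n = length k \<and> sorted_wrt (<) n \<and> (\<forall>x\<in>set n. 0 < x)}.
              \<Prod>i<length k. 1 / real (n ! i) ^ (k ! i))"

text \<open>Harmonic product of basis words e_k * e_l in H^1 (coefficients w.r.t. the
  basis e_m), computed on reversed lists: (a # k) stands for the word (rev k) e_a.\<close>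
fun hpr :: "nat list \<Rightarrow> nat list \<Rightarrow> (rat \<times> nat list) list" where
  "hpr [] l = [(1, l)]"
| "hpr k [] = [(1, k)]"
| "hpr (a # k) (b # l) =
     map (\<lambda>(c, m). (c, b # m)) (hpr (a # k) l)
   @ map (\<lambda>(c, m). (c, a # m)) (hpr k (b # l))
   @ map (\<lambda>(c, m). (- c, (a + b) # m)) (hpr k l)"

definition hp :: "nat list \<Rightarrow> nat list \<Rightarrow> (rat \<times> nat list) list" where
  "hp k l = map (\<lambda>(c, m). (c, rev m)) (hpr (rev k) (rev l))"

definition lin_poly :: "(nat list \<Rightarrow> real poly) \<Rightarrow> (rat \<times> nat list) list \<Rightarrow> real poly" where
  "lin_poly f xs = (\<Sum>(c, m)\<leftarrow>xs. smult (of_rat c) (f m))"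

definition Zstar :: "nat list \<Rightarrow> real poly" where
  "Zstar = (THE Z. (\<forall>k. \<not> is_index k \<longrightarrow> Z k = 0)
      \<and> Z [] = 1
      \<and> (\<forall>k. is_index k \<and> admissible k \<longrightarrow> Z k = (-1) ^ length k * [:mzv k:])
      \<and> Z [1] = - [:0, 1:]
      \<and> (\<forall>k l. is_index k \<and> is_index l \<longrightarrow> lin_poly Z (hp k l) = Z k * Z l))"

definition zeta_star :: "nat list \<Rightarrow> real poly" where
  "zeta_star k = (-1) ^ length k * Zstar k"

text \<open>Harmonic product of indices, transported via k \<mapsto> (-1)^dep(k) e_k.\<close>
definition stuffle :: "nat list \<Rightarrow> nat list \<Rightarrow> (rat \<times> nat list) list" where
  "stuffle k l = map (\<lambda>(c, m). ((-1) ^ (length k + length l + length m) * c, m)) (hp k l)"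

definition bcoef :: "nat list \<Rightarrow> nat list \<Rightarrow> nat" where
  "bcoef k n = (\<Prod>i<length k. (k ! i + n ! i - 1) choose (n ! i))"

definition oplus :: "nat list \<Rightarrow> nat list \<Rightarrow> nat list" where
  "oplus k n = map2 (+) k n"

definition zeta_shift :: "nat list \<Rightarrow> real poly fps" where
  "zeta_shift k = Abs_fps (\<lambda>m. \<Sum>n\<in>{n::nat list. length n = length k \<and> sum_list n = m}.
       of_nat (bcoef k n) * zeta_star (oplus k n) * (-1) ^ m)"

definition lin_shift :: "(rat \<times> nat list) list \<Rightarrow> real poly fps" where
  "lin_shift xs = (\<Sum>(c, m)\<leftarrow>xs. fps_const [:of_rat c:] * zeta_shift m)"

end

theory Submission
  imports Defs "HOL-Computational_Algebra.Fundamental_Theorem_Algebra" "HOL-Analysis.Harmonic_Numbers"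
begin

text \<open>
  \<open>Z\<^sup>*\<close> exists: the truncated sums \<open>\<zeta>\<^sub>N(k)\<close>, restricted to \<open>n\<^sub>r < N\<close>, multiply exactly by
  the harmonic product, and each of them equals \<open>P\<^sub>k(H\<^sub>N)\<close> up to an error decaying faster than any
  power of \<open>H\<^sub>N = 1 + 1/2 + \<dots> + 1/(N - 1)\<close>. Since \<open>H\<^sub>N \<rightarrow> \<infinity>\<close> the polynomial \<open>P\<^sub>k\<close> is unique, so
  \<open>e\<^sub>k \<mapsto> P\<^sub>k(T)\<close> is a homomorphism for \<open>*\<close>. It is the only one with the prescribed values, because
  every index is reached from admissible ones and \<open>(1)\<close> via products with \<open>e\<^sub>1\<close>.

  For the shifted values write \<open>(1 - t)\<^sup>-\<^sup>a = \<Sum>\<^sub>i b(a, i) t\<^sup>i\<close>. The linear map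
  \<open>e\<^sub>k \<mapsto> \<Sum>\<^sub>n b(k, n) t\<^sup>w\<^sup>t\<^sup>(\<^sup>n\<^sup>) e\<^sub>k\<^sub>\<oplus>\<^sub>n\<close> commutes with the recursion defining \<open>*\<close>: the only
  non-trivial case is the merged letter \<open>a + b\<close>, and there
  \<open>(1 - t)\<^sup>-\<^sup>a (1 - t)\<^sup>-\<^sup>b = (1 - t)\<^sup>-\<^sup>(\<^sup>a\<^sup>+\<^sup>b\<^sup>)\<close> is exactly what is needed. Hence
  \<open>\<zeta>\<^sup>t\<^sup>,\<^sup>*\<^sub>s\<^sub>h\<^sub>i\<^sub>f\<^sub>t\<close> is \<open>Z\<^sup>*\<close> composed with a homomorphism, followed by \<open>t \<mapsto> -t\<close>.
\<close>

section \<open>The binomial shift operator\<close>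

text \<open>The coefficient of \<open>t\<^sup>i\<close> in \<open>(1 - t)\<^sup>-\<^sup>a\<close>; the weight \<open>b(k, n)\<close> is a product of these.\<close>
definition shift_coeff :: "nat \<Rightarrow> nat \<Rightarrow> nat" where
  "shift_coeff a i = (a + i - 1) choose i"

lemma fps_shift_coeff:
  "Abs_fps (\<lambda>i. of_nat (shift_coeff a i)) = inverse ((1 - fps_X :: 'a :: field_char_0 fps) ^ a)"
proof (cases "a = 0")
  case True
  then show ?thesis by (intro fps_ext) (simp add: shift_coeff_def)
next
  case False
  then show ?thesis
    using one_minus_const_fps_X_neg_power'[of a "1 :: 'a"] by (simp add: shift_coeff_def)
qed

lemma shift_coeff_Vandermonde:
  "(\<Sum>i\<le>w. shift_coeff a i * shift_coeff b (w - i)) = shift_coeff (a + b) w"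
proof -
  let ?S = "\<lambda>a. Abs_fps (\<lambda>i. of_nat (shift_coeff a i)) :: real fps"
  have "?S a * ?S b = ?S (a + b)"
    by (simp add: fps_shift_coeff power_add fps_inverse_mult)
  then have "fps_nth (?S a * ?S b) w = fps_nth (?S (a + b)) w" by simp
  then have "real (\<Sum>i\<le>w. shift_coeff a i * shift_coeff b (w - i)) = real (shift_coeff (a + b) w)"
    by (simp add: fps_mult_nth atLeast0AtMost)
  then show ?thesis by (simp only: of_nat_eq_iff)
qed

lemma sum_triangle_swap:
  "(\<Sum>i\<le>(d::nat). \<Sum>j\<le>d - i. f i j) = (\<Sum>j\<le>d. \<Sum>i\<le>d - j. (f i j :: 'a::comm_monoid_add))"
proof -
  have "(\<Sum>i\<le>d. \<Sum>j\<le>d - i. f i j) = (\<Sum>(i, j)\<in>{(i, j). i + j \<le> d}. f i j)"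
    by (simp add: sum.Sigma) (rule sum.cong, auto)
  also have "\<dots> = (\<Sum>(j, i)\<in>{(j, i). j + i \<le> d}. f i j)"
    by (rule sum.reindex_bij_witness[where i="\<lambda>(j, i). (i, j)" and j="\<lambda>(i, j). (j, i)"]) auto
  also have "\<dots> = (\<Sum>j\<le>d. \<Sum>i\<le>d - j. f i j)"
    by (simp add: sum.Sigma) (rule sum.cong, auto)
  finally show ?thesis .
qed

definition binom_shift :: "nat \<Rightarrow> (nat \<Rightarrow> 'a::comm_ring_1 fps) \<Rightarrow> 'a fps" where
  "binom_shift a Q = Abs_fps (\<lambda>d. \<Sum>i\<le>d. of_nat (shift_coeff a i) * fps_nth (Q i) (d - i))"

lemma binom_shift_nth:
  "fps_nth (binom_shift a Q) d = (\<Sum>i\<le>d. of_nat (shift_coeff a i) * fps_nth (Q i) (d - i))"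
  by (simp add: binom_shift_def)

lemma binom_shift_add: "binom_shift a (\<lambda>i. P i + Q i) = binom_shift a P + binom_shift a Q"
  by (rule fps_ext) (simp add: binom_shift_nth algebra_simps sum.distrib)

lemma binom_shift_diff: "binom_shift a (\<lambda>i. P i - Q i) = binom_shift a P - binom_shift a Q"
  by (rule fps_ext) (simp add: binom_shift_nth algebra_simps sum_subtractf)

lemma binom_shift_zero: "binom_shift a (\<lambda>i. 0) = 0"
  by (rule fps_ext) (simp add: binom_shift_nth)

lemma binom_shift_mult_left: "binom_shift a (\<lambda>i. c * Q i) = c * binom_shift a Q"
proof (rule fps_ext)
  fix d
  have "fps_nth (binom_shift a (\<lambda>i. c * Q i)) d =
      (\<Sum>i\<le>d. \<Sum>e\<le>d - i. of_nat (shift_coeff a i) * (fps_nth c e * fps_nth (Q i) (d - i - e)))"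
    by (simp add: binom_shift_nth fps_mult_nth atLeast0AtMost sum_distrib_left)
  also have "\<dots> = (\<Sum>e\<le>d. \<Sum>i\<le>d - e. of_nat (shift_coeff a i) * (fps_nth c e * fps_nth (Q i) (d - i - e)))"
    by (rule sum_triangle_swap)
  also have "\<dots> = fps_nth (c * binom_shift a Q) d"
    by (simp add: binom_shift_nth fps_mult_nth atLeast0AtMost sum_distrib_left diff_diff_add algebra_simps)
  finally show "fps_nth (binom_shift a (\<lambda>i. c * Q i)) d = fps_nth (c * binom_shift a Q) d" .
qed

lemma binom_shift_commute:
  "binom_shift a (\<lambda>i. binom_shift b (\<lambda>j. Q i j)) = binom_shift b (\<lambda>j. binom_shift a (\<lambda>i. Q i j))"
proof (rule fps_ext)
  fix d
  have "fps_nth (binom_shift a (\<lambda>i. binom_shift b (\<lambda>j. Q i j))) d =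
      (\<Sum>i\<le>d. \<Sum>j\<le>d - i. of_nat (shift_coeff a i) * (of_nat (shift_coeff b j) * fps_nth (Q i j) (d - i - j)))"
    by (simp add: binom_shift_nth sum_distrib_left)
  also have "\<dots> = (\<Sum>j\<le>d. \<Sum>i\<le>d - j. of_nat (shift_coeff a i) * (of_nat (shift_coeff b j) * fps_nth (Q i j) (d - i - j)))"
    by (rule sum_triangle_swap)
  also have "\<dots> = fps_nth (binom_shift b (\<lambda>j. binom_shift a (\<lambda>i. Q i j))) d"
    by (simp add: binom_shift_nth sum_distrib_left diff_diff_add algebra_simps)
  finally show "fps_nth (binom_shift a (\<lambda>i. binom_shift b (\<lambda>j. Q i j))) d =
      fps_nth (binom_shift b (\<lambda>j. binom_shift a (\<lambda>i. Q i j))) d" .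
qed

lemma binom_shift_binom_shift:
  "binom_shift a (\<lambda>i. binom_shift b (\<lambda>j. Q (i + j))) = binom_shift (a + b) Q"
proof (rule fps_ext)
  fix d
  have "fps_nth (binom_shift a (\<lambda>i. binom_shift b (\<lambda>j. Q (i + j)))) d =
      (\<Sum>(i, j)\<in>{(i, j). i + j \<le> d}.
         of_nat (shift_coeff a i) * (of_nat (shift_coeff b j) * fps_nth (Q (i + j)) (d - (i + j))))"
    by (simp add: binom_shift_nth sum_distrib_left diff_diff_add sum.Sigma) (rule sum.cong, auto)
  also have "\<dots> = (\<Sum>w\<le>d. of_nat (\<Sum>i\<le>w. shift_coeff a i * shift_coeff b (w - i)) * fps_nth (Q w) (d - w))"
    by (subst sum.triangle_reindex_eq) (simp add: sum_distrib_right mult.assoc)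
  also have "\<dots> = fps_nth (binom_shift (a + b) Q) d"
    by (simp add: shift_coeff_Vandermonde binom_shift_nth)
  finally show "fps_nth (binom_shift a (\<lambda>i. binom_shift b (\<lambda>j. Q (i + j)))) d =
      fps_nth (binom_shift (a + b) Q) d" .
qed

text \<open>Lists of positive integers are handled in reversed order, as in \<open>hpr\<close>:
  \<open>shift_sum Y r = \<Sum>\<^sub>n b(r, n) t\<^sup>w\<^sup>t\<^sup>(\<^sup>n\<^sup>) Y (r \<oplus> n)\<close> (see \<open>shift_sum_nth\<close>).\<close>
fun shift_sum :: "(nat list \<Rightarrow> 'a::comm_ring_1 fps) \<Rightarrow> nat list \<Rightarrow> 'a fps" where
  "shift_sum Y [] = Y []"
| "shift_sum Y (a # r) = binom_shift a (\<lambda>i. shift_sum (\<lambda>u. Y ((a + i) # u)) r)"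

lemma shift_sum_add: "shift_sum (\<lambda>u. F u + G u) r = shift_sum F r + shift_sum G r"
  by (induction r arbitrary: F G) (simp_all add: binom_shift_add)

lemma shift_sum_diff: "shift_sum (\<lambda>u. F u - G u) r = shift_sum F r - shift_sum G r"
  by (induction r arbitrary: F G) (simp_all add: binom_shift_diff)

lemma shift_sum_mult_left: "shift_sum (\<lambda>u. c * F u) r = c * shift_sum F r"
  by (induction r arbitrary: F) (simp_all add: binom_shift_mult_left)

lemma shift_sum_binom_shift:
  "shift_sum (\<lambda>u. binom_shift b (\<lambda>j. Q j u)) r = binom_shift b (\<lambda>j. shift_sum (Q j) r)"
proof (induction r arbitrary: Q)
  case (Cons a r)
  then show ?case by (simp add: binom_shift_commute[of a b])
qed simp

lemma is_index_Nil [simp]: "is_index []"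
  by (simp add: is_index_def)

lemma is_index_Cons [simp]: "is_index (a # r) \<longleftrightarrow> 0 < a \<and> is_index r"
  by (simp add: is_index_def)

lemma is_index_append [simp]: "is_index (xs @ ys) \<longleftrightarrow> is_index xs \<and> is_index ys"
  by (auto simp: is_index_def)

lemma is_index_rev [simp]: "is_index (rev r) = is_index r"
  by (simp add: is_index_def)

lemma shift_sum_cong:
  "is_index r \<Longrightarrow> (\<And>u. is_index u \<Longrightarrow> F u = F' u) \<Longrightarrow> shift_sum F r = shift_sum F' r"
proof (induction r arbitrary: F F')
  case (Cons a r)
  then have "shift_sum (\<lambda>u. F ((a + i) # u)) r = shift_sum (\<lambda>u. F' ((a + i) # u)) r" for i
    by (intro Cons.IH) auto
  then show ?case by simp
qed simp

definition rat_fps :: "rat \<Rightarrow> real poly fps" where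
  "rat_fps c = fps_const [:of_rat c:]"

lemma rat_fps_1 [simp]: "rat_fps 1 = 1"
  by (simp add: rat_fps_def)

lemma rat_fps_uminus: "rat_fps (- c) = - rat_fps c"
  by (simp add: rat_fps_def of_rat_minus)

definition hpr_comb :: "(nat list \<Rightarrow> real poly fps) \<Rightarrow> nat list \<Rightarrow> nat list \<Rightarrow> real poly fps" where
  "hpr_comb Y u v = (\<Sum>(c, m)\<leftarrow>hpr u v. rat_fps c * Y m)"

lemma hpr_Nil2: "hpr u [] = [(1, u)]"
  by (cases u) simp_all

lemma sum_list_map_cons_snd:
  "(\<Sum>(c, m)\<leftarrow>map (\<lambda>(c, m). (c, f m)) xs. h c m) = (\<Sum>(c, m)\<leftarrow>xs. h c (f m))"
  by (induction xs) auto

lemma sum_list_rat_fps_map_uminus: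
  "(\<Sum>(c, m)\<leftarrow>map (\<lambda>(c, m). (- c, f m)) xs. rat_fps c * g m) = - (\<Sum>(c, m)\<leftarrow>xs. rat_fps c * g (f m))"
  by (induction xs) (auto simp: rat_fps_uminus)

lemma hpr_comb_Cons_Cons:
  "hpr_comb Y (x # u) (y # v) = hpr_comb (\<lambda>m. Y (y # m)) (x # u) v + hpr_comb (\<lambda>m. Y (x # m)) u (y # v)
     - hpr_comb (\<lambda>m. Y ((x + y) # m)) u v"
  unfolding hpr_comb_def
  by (simp only: hpr.simps map_append sum_list_append sum_list_rat_fps_map_uminus sum_list_map_cons_snd) simp

lemma sum_list_binom_shift:
  "(\<Sum>(c, m)\<leftarrow>xs. rat_fps c * binom_shift a (\<lambda>j. Q j m)) = binom_shift a (\<lambda>j. \<Sum>(c, m)\<leftarrow>xs. rat_fps c * Q j m)"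
  by (induction xs) (auto simp: binom_shift_zero binom_shift_add binom_shift_mult_left)

text \<open>In the recursion of \<open>hpr\<close> the
  merged letter \<open>a + b\<close> is shifted by \<open>binom_shift (a + b)\<close> on the left and by
  \<open>binom_shift a \<circ> binom_shift b\<close> on the right; these agree by Vandermonde's identity.\<close>
theorem shift_sum_hpr:
  "(\<Sum>(c, m)\<leftarrow>hpr r s. rat_fps c * shift_sum Y m) = shift_sum (\<lambda>u. shift_sum (\<lambda>v. hpr_comb Y u v) s) r"
proof (induction r s arbitrary: Y rule: hpr.induct)
  case (1 l)
  then show ?case by (simp add: hpr_comb_def)
next
  case (2 a k)
  have "(\<lambda>u. shift_sum (\<lambda>v. hpr_comb Y u v) []) = Y" by (rule ext) (simp add: hpr_comb_def hpr_Nil2)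
  then show ?case by simp
next
  case (3 a k b l)
  define Ys where "Ys \<beta> = (\<lambda>m. Y (\<beta> # m))" for \<beta>
  let ?H = "\<lambda>Y u v. shift_sum (\<lambda>u. shift_sum (\<lambda>v. hpr_comb Y u v) v) u"
  have "(\<Sum>(c, m)\<leftarrow>hpr (a # k) (b # l). rat_fps c * shift_sum Y m) =
      binom_shift b (\<lambda>j. \<Sum>(c, m)\<leftarrow>hpr (a # k) l. rat_fps c * shift_sum (Ys (b + j)) m)
    + binom_shift a (\<lambda>i. \<Sum>(c, m)\<leftarrow>hpr k (b # l). rat_fps c * shift_sum (Ys (a + i)) m)
    - binom_shift (a + b) (\<lambda>w. \<Sum>(c, m)\<leftarrow>hpr k l. rat_fps c * shift_sum (Ys (a + b + w)) m)"
    by (simp only: hpr.simps(3) map_append sum_list_append sum_list_rat_fps_map_uminus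
        sum_list_map_cons_snd shift_sum.simps(2) sum_list_binom_shift) (simp add: Ys_def add_ac)
  also have "\<dots> = binom_shift b (\<lambda>j. ?H (Ys (b + j)) (a # k) l)
    + binom_shift a (\<lambda>i. ?H (Ys (a + i)) k (b # l)) - binom_shift (a + b) (\<lambda>w. ?H (Ys (a + b + w)) k l)"
    using "3.IH" by simp
  also have "\<dots> = ?H Y (a # k) (b # l)"
    by (simp add: hpr_comb_Cons_Cons shift_sum_add shift_sum_diff binom_shift_add binom_shift_diff
        shift_sum_binom_shift binom_shift_commute[of a b] Ys_def add_ac
        flip: binom_shift_binom_shift[of a b])
  finally show ?case .
qed

definition weak_compositions :: "nat \<Rightarrow> nat \<Rightarrow> nat list set" where
  "weak_compositions L d = {n. length n = L \<and> sum_list n = d}"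

lemma finite_weak_compositions: "finite (weak_compositions L d)"
proof (rule finite_subset)
  show "weak_compositions L d \<subseteq> {n. set n \<subseteq> {..d} \<and> length n = L}"
    unfolding weak_compositions_def by (auto simp: member_le_sum_list)
qed (rule finite_lists_length_eq, simp)

lemma weak_compositions_Suc:
  "weak_compositions (Suc L) d = (\<lambda>(i, n). i # n) ` (SIGMA i:{..d}. weak_compositions L (d - i))"
proof (rule set_eqI)
  fix x show "x \<in> weak_compositions (Suc L) d \<longleftrightarrow> x \<in> (\<lambda>(i, n). i # n) ` (SIGMA i:{..d}. weak_compositions L (d - i))"
    by (cases x) (auto simp: weak_compositions_def image_iff)
qed

lemma sum_weak_compositions_rev:
  "(\<Sum>n\<in>weak_compositions L d. f (rev n)) = (\<Sum>n\<in>weak_compositions L d. f n)"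
  by (rule sum.reindex_bij_witness[where i=rev and j=rev]) (auto simp: weak_compositions_def)

lemma bcoef_Cons: "bcoef (a # r) (i # n) = shift_coeff a i * bcoef r n"
  unfolding bcoef_def shift_coeff_def length_Cons prod.lessThan_Suc_shift by simp

lemma bcoef_rev: "length n = length k \<Longrightarrow> bcoef (rev k) (rev n) = bcoef k n"
proof -
  assume len: "length n = length k"
  have "bcoef (rev k) (rev n) = (\<Prod>i<length k. (\<lambda>j. (k ! j + n ! j - 1) choose (n ! j)) (length k - Suc i))"
    unfolding bcoef_def by (rule prod.cong) (auto simp: rev_nth len)
  also have "\<dots> = bcoef k n" unfolding bcoef_def by (rule prod.nat_diff_reindex)
  finally show ?thesis .
qed

lemma oplus_Cons: "oplus (a # r) (i # n) = (a + i) # oplus r n"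
  by (simp add: oplus_def)

lemma length_oplus [simp]: "length (oplus k n) = min (length k) (length n)"
  by (simp add: oplus_def)

lemma oplus_rev: "length n = length k \<Longrightarrow> oplus (rev k) (rev n) = rev (oplus k n)"
  by (simp add: oplus_def zip_rev rev_map)

lemma shift_sum_nth:
  "fps_nth (shift_sum (\<lambda>u. fps_const (g u)) r) d =
     (\<Sum>n\<in>weak_compositions (length r) d. of_nat (bcoef r n) * g (oplus r n))"
proof (induction r arbitrary: g d)
  case Nil
  have "weak_compositions 0 d = (if d = 0 then {[]} else {})" by (auto simp: weak_compositions_def)
  then show ?case by (simp add: bcoef_def oplus_def)
next
  case (Cons a r)
  let ?W = "weak_compositions (length r)"
  have "fps_nth (shift_sum (\<lambda>u. fps_const (g u)) (a # r)) d =
      (\<Sum>i\<le>d. \<Sum>n\<in>?W (d - i). of_nat (bcoef (a # r) (i # n)) * g (oplus (a # r) (i # n)))"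
    by (simp add: binom_shift_nth Cons.IH sum_distrib_left bcoef_Cons oplus_Cons mult.assoc)
  also have "\<dots> = (\<Sum>(i, n)\<in>(SIGMA i:{..d}. ?W (d - i)). of_nat (bcoef (a # r) (i # n)) * g (oplus (a # r) (i # n)))"
    by (rule sum.Sigma) (auto simp: finite_weak_compositions)
  also have "\<dots> = (\<Sum>n\<in>weak_compositions (length (a # r)) d. of_nat (bcoef (a # r) n) * g (oplus (a # r) n))"
    by (simp add: weak_compositions_Suc sum.reindex inj_on_def case_prod_unfold)
  finally show ?case .
qed

definition Zstar_fps :: "nat list \<Rightarrow> real poly fps" where
  "Zstar_fps u = fps_const (Zstar (rev u))"

lemma fps_const_neg_one_power: "fps_const ((-1 :: 'a :: comm_ring_1) ^ n) = (-1) ^ n"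
  by (cases "even n") simp_all

text \<open>Composition with \<open>- fps_X\<close> accounts for the sign \<open>(-t)\<^sup>w\<^sup>t\<^sup>(\<^sup>n\<^sup>)\<close>.\<close>
lemma zeta_shift_eq_shift_sum:
  "zeta_shift k = fps_const ((-1) ^ length k) * (shift_sum Zstar_fps (rev k) oo - fps_X)"
proof (rule fps_ext)
  fix d
  let ?W = "weak_compositions (length k) d"
  let ?S = "\<Sum>n\<in>?W. of_nat (bcoef k n) * Zstar (oplus k n)"
  have "fps_nth (shift_sum Zstar_fps (rev k)) d =
      (\<Sum>n\<in>?W. of_nat (bcoef (rev k) n) * Zstar (rev (oplus (rev k) n)))"
    using shift_sum_nth[of "\<lambda>u. Zstar (rev u)" "rev k" d] by (simp add: Zstar_fps_def [abs_def])
  also have "\<dots> = (\<Sum>n\<in>?W. of_nat (bcoef (rev k) (rev n)) * Zstar (rev (oplus (rev k) (rev n))))"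
    by (rule sum_weak_compositions_rev[symmetric])
  also have "\<dots> = ?S"
    by (rule sum.cong) (auto simp: weak_compositions_def bcoef_rev oplus_rev)
  finally have "fps_nth (shift_sum Zstar_fps (rev k)) d = ?S" .
  moreover have "fps_nth (zeta_shift k) d = (-1) ^ length k * ((-1) ^ d * ?S)"
    unfolding zeta_shift_def zeta_star_def weak_compositions_def
    by (auto simp: sum_distrib_left mult_ac intro!: sum.cong)
  ultimately show "fps_nth (zeta_shift k) d =
      fps_nth (fps_const ((-1) ^ length k) * (shift_sum Zstar_fps (rev k) oo - fps_X)) d"
    by (simp add: fps_compose_uminus')
qed

section \<open>Truncated multiple zeta values\<close>

definition lin_real :: "(nat list \<Rightarrow> real) \<Rightarrow> (rat \<times> nat list) list \<Rightarrow> real" where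
  "lin_real X xs = (\<Sum>(c, m)\<leftarrow>xs. of_rat c * X m)"

lemma lin_real_hpr_Cons_Cons:
  "lin_real X (hpr (x # u) (y # v)) = lin_real (\<lambda>m. X (y # m)) (hpr (x # u) v)
     + lin_real (\<lambda>m. X (x # m)) (hpr u (y # v)) - lin_real (\<lambda>m. X ((x + y) # m)) (hpr u v)"
proof -
  have neg: "(\<Sum>(c, m)\<leftarrow>map (\<lambda>(c, m). (- c, f m)) xs. of_rat c * X m) =
      - (\<Sum>(c, m)\<leftarrow>xs. of_rat c * X (f m))" for f and xs :: "(rat \<times> nat list) list"
    by (induction xs) (auto simp: of_rat_minus)
  show ?thesis
    unfolding lin_real_def by (simp only: hpr.simps map_append sum_list_append sum_list_map_cons_snd neg)
qed

lemma lin_real_diff_mult: "lin_real (\<lambda>m. A m - c * B m) xs = lin_real A xs - c * lin_real B xs"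
  by (induction xs) (auto simp: lin_real_def algebra_simps)

declare hpr.simps(3) [simp del]

lemma hpr_Nil_mem: "(c, []) \<in> set (hpr r s) \<Longrightarrow> r = [] \<and> s = []"
proof (cases "(r, s)" rule: hpr.cases)
  case (3 a k b l)
  moreover have "(c, []) \<notin> set (hpr (a # k) (b # l))"
    unfolding hpr.simps(3) set_append set_map by auto
  ultimately show "(c, []) \<in> set (hpr r s) \<Longrightarrow> r = [] \<and> s = []" by simp
qed (auto simp: hpr_Nil2)

lemma is_index_hpr: "is_index r \<Longrightarrow> is_index s \<Longrightarrow> (c, m) \<in> set (hpr r s) \<Longrightarrow> is_index m"
proof (induction r s arbitrary: c m rule: hpr.induct)
  case (3 a k b l)
  from "3.prems"(3) consider
      m' where "m = b # m'" "(c, m') \<in> set (hpr (a # k) l)"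
    | m' where "m = a # m'" "(c, m') \<in> set (hpr k (b # l))"
    | c' m' where "m = (a + b) # m'" "(c', m') \<in> set (hpr k l)"
    unfolding hpr.simps(3) set_append set_map by (elim UnE imageE) (auto split: prod.splits)
  then show ?case
  proof cases
    case (1 m') then show ?thesis using "3.IH"(1)[of c m'] "3.prems" by simp
  next
    case (2 m') then show ?thesis using "3.IH"(2)[of c m'] "3.prems" by simp
  next
    case (3 c' m') then show ?thesis using "3.IH"(3)[of c' m'] "3.prems" by simp
  qed
qed (auto simp: hpr_Nil2)

text \<open>\<open>mzv_trunc N (rev k)\<close> is the series of \<open>\<zeta>(k)\<close> restricted to \<open>n\<^sub>r < N\<close> (see \<open>sum_mzv_term_below\<close>).\<close>
fun mzv_trunc :: "nat \<Rightarrow> nat list \<Rightarrow> real" where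
  "mzv_trunc N [] = 1"
| "mzv_trunc N (a # r) = (\<Sum>m\<in>{1..<N}. mzv_trunc m r / real m ^ a)"

definition smzv_trunc :: "nat \<Rightarrow> nat list \<Rightarrow> real" where
  "smzv_trunc N r = (-1) ^ length r * mzv_trunc N r"

definition inv_pow :: "nat \<Rightarrow> nat \<Rightarrow> real" where
  "inv_pow N a = (if N = 0 then 0 else 1 / real N ^ a)"

lemma inv_pow_add: "inv_pow N (a + b) = inv_pow N a * inv_pow N b"
  by (simp add: inv_pow_def power_add)

lemma mzv_trunc_Suc: "mzv_trunc (Suc N) (a # r) = mzv_trunc N (a # r) + inv_pow N a * mzv_trunc N r"
proof (cases N)
  case (Suc M)
  then have "{1..<Suc N} = insert N {1..<N}" by auto
  then show ?thesis using Suc by (simp add: inv_pow_def)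
qed (simp add: inv_pow_def)

lemma smzv_trunc_Suc:
  "smzv_trunc (Suc N) (a # r) = smzv_trunc N (a # r) - inv_pow N a * smzv_trunc N r"
  by (simp add: smzv_trunc_def mzv_trunc_Suc algebra_simps del: mzv_trunc.simps)

lemma smzv_trunc_Nil [simp]: "smzv_trunc N [] = 1"
  by (simp add: smzv_trunc_def)

lemma smzv_trunc_0: "smzv_trunc 0 r = (if r = [] then 1 else 0)"
  by (cases r) (simp_all add: smzv_trunc_def)

text \<open>Truncated sums obey the harmonic product exactly: raising the truncation from \<open>N\<close> to
  \<open>N + 1\<close> adds the terms whose largest summation variable equals \<open>N\<close>.\<close>
lemma lin_real_smzv_trunc_hpr: "lin_real (smzv_trunc N) (hpr r s) = smzv_trunc N r * smzv_trunc N s"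
proof (induction N arbitrary: r s)
  case 0
  have "lin_real (smzv_trunc 0) (hpr r s) = 0" if "r \<noteq> [] \<or> s \<noteq> []"
    unfolding lin_real_def using that hpr_Nil_mem
    by (subst map_cong[OF refl, where g="\<lambda>_. 0"]) (auto simp: smzv_trunc_0)
  then show ?case by (cases "r = [] \<and> s = []") (auto simp: lin_real_def smzv_trunc_0)
next
  case (Suc N)
  show ?case
  proof (cases "(r, s)" rule: hpr.cases)
    case (3 a k b l)
    let ?X = "smzv_trunc N"
    have "lin_real (smzv_trunc (Suc N)) (hpr (a # k) (b # l)) =
        (lin_real (\<lambda>m. ?X (b # m)) (hpr (a # k) l) - inv_pow N b * lin_real ?X (hpr (a # k) l))
      + (lin_real (\<lambda>m. ?X (a # m)) (hpr k (b # l)) - inv_pow N a * lin_real ?X (hpr k (b # l)))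
      - (lin_real (\<lambda>m. ?X ((a + b) # m)) (hpr k l) - inv_pow N (a + b) * lin_real ?X (hpr k l))"
      by (simp only: lin_real_hpr_Cons_Cons smzv_trunc_Suc lin_real_diff_mult)
    also have "\<dots> = lin_real ?X (hpr (a # k) (b # l))
        - inv_pow N b * lin_real ?X (hpr (a # k) l) - inv_pow N a * lin_real ?X (hpr k (b # l))
        + inv_pow N (a + b) * lin_real ?X (hpr k l)"
      unfolding lin_real_hpr_Cons_Cons[of ?X a k b l] by simp
    also have "\<dots> = (?X (a # k) - inv_pow N a * ?X k) * (?X (b # l) - inv_pow N b * ?X l)"
      unfolding Suc.IH inv_pow_add by (simp add: algebra_simps del: hpr.simps)
    moreover from 3 have "r = a # k" "s = b # l" by auto
    ultimately show ?thesis by (simp only: smzv_trunc_Suc)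
  qed (auto simp: lin_real_def hpr_Nil2)
qed

section \<open>Asymptotic expansions in the harmonic numbers\<close>

definition harm_below :: "nat \<Rightarrow> real" where
  "harm_below N = (\<Sum>m\<in>{1..<N}. 1 / real m)"

lemma smzv_trunc_one: "smzv_trunc N [1] = - harm_below N"
  by (simp add: smzv_trunc_def harm_below_def)

lemma harm_below_Suc: "harm_below (Suc n) = harm n"
  unfolding harm_below_def harm_def by (rule sum.cong) (auto simp: field_simps)

lemma harm_below_nonneg: "0 \<le> harm_below N"
  unfolding harm_below_def by (rule sum_nonneg) auto

lemma harm_below_mono: "m \<le> n \<Longrightarrow> harm_below m \<le> harm_below n"
  unfolding harm_below_def by (rule sum_mono2) auto

lemma harm_below_at_top: "filterlim harm_below at_top sequentially"
  using harm_at_top filterlim_sequentially_Suc[of harm_below] by (simp add: harm_below_Suc)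

lemma poly_harm_below_tendsto_zero_imp_zero:
  assumes "(\<lambda>N. poly p (harm_below N)) \<longlonglongrightarrow> 0"
  shows "p = 0"
proof (rule ccontr)
  assume "p \<noteq> 0"
  obtain a p' where p: "p = pCons a p'" by (cases p) auto
  show False
  proof (cases "p' = 0")
    case True
    then have "a = 0" using assms p by (simp add: LIMSEQ_const_iff)
    then show False using \<open>p \<noteq> 0\<close> p True by simp
  next
    case False
    obtain r where r: "\<And>z::real. r \<le> norm z \<Longrightarrow> 1 \<le> norm (poly (pCons a p') z)"
      using poly_infinity[OF False, of 1 a] by blast
    have "eventually (\<lambda>N. r \<le> harm_below N) sequentially"
      using harm_below_at_top by (simp add: filterlim_at_top)
    moreover have "eventually (\<lambda>N. dist (poly p (harm_below N)) 0 < 1) sequentially"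
      using tendstoD[OF assms, of 1] by simp
    ultimately have "eventually (\<lambda>N. False) sequentially"
    proof (rule eventually_elim2)
      fix N assume "r \<le> harm_below N" "dist (poly p (harm_below N)) 0 < 1"
      with r[of "harm_below N"] harm_below_nonneg[of N] p show False by simp
    qed
    then show False by simp
  qed
qed

text \<open>\<open>f N = p(H\<^sub>N) + o(H\<^sub>N\<^sup>-\<^sup>j)\<close> for every \<open>j\<close>, where \<open>H\<^sub>N = harm_below N\<close>. Allowing an
  arbitrary polynomial factor \<open>q\<close> makes the relation closed under products.\<close>
definition has_reg_poly :: "(nat \<Rightarrow> real) \<Rightarrow> real poly \<Rightarrow> bool" where
  "has_reg_poly f p \<longleftrightarrow> (\<forall>q. (\<lambda>N. (f N - poly p (harm_below N)) * poly q (harm_below N)) \<longlonglongrightarrow> 0)"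

lemma has_reg_poly_tendsto: "has_reg_poly f p \<Longrightarrow> (\<lambda>N. f N - poly p (harm_below N)) \<longlonglongrightarrow> 0"
  unfolding has_reg_poly_def by (drule spec[of _ 1]) simp

lemma has_reg_poly_unique:
  assumes "has_reg_poly f p" "has_reg_poly f p'"
  shows "p = p'"
proof -
  have "(\<lambda>N. (f N - poly p (harm_below N)) - (f N - poly p' (harm_below N))) \<longlonglongrightarrow> 0 - 0"
    by (intro tendsto_diff has_reg_poly_tendsto assms)
  then have "(\<lambda>N. poly (p' - p) (harm_below N)) \<longlonglongrightarrow> 0" by simp
  then show ?thesis using poly_harm_below_tendsto_zero_imp_zero[of "p' - p"] by simp
qed

lemma has_reg_poly_poly: "has_reg_poly (\<lambda>N. poly p (harm_below N)) p"
  by (simp add: has_reg_poly_def)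

lemma has_reg_poly_add:
  assumes "has_reg_poly f p" "has_reg_poly g r"
  shows "has_reg_poly (\<lambda>N. f N + g N) (p + r)"
  unfolding has_reg_poly_def
proof
  fix q
  have "(\<lambda>N. (f N - poly p (harm_below N)) * poly q (harm_below N)
      + (g N - poly r (harm_below N)) * poly q (harm_below N)) \<longlonglongrightarrow> 0 + 0"
    using assms unfolding has_reg_poly_def by (intro tendsto_add) auto
  then show "(\<lambda>N. (f N + g N - poly (p + r) (harm_below N)) * poly q (harm_below N)) \<longlonglongrightarrow> 0"
    by (simp add: algebra_simps)
qed

lemma has_reg_poly_mult_left:
  assumes "has_reg_poly f p"
  shows "has_reg_poly (\<lambda>N. c * f N) (smult c p)"
  unfolding has_reg_poly_def
proof
  fix q
  have "(\<lambda>N. c * ((f N - poly p (harm_below N)) * poly q (harm_below N))) \<longlonglongrightarrow> c * 0"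
    using assms unfolding has_reg_poly_def by (intro tendsto_mult) auto
  then show "(\<lambda>N. (c * f N - poly (smult c p) (harm_below N)) * poly q (harm_below N)) \<longlonglongrightarrow> 0"
    by (simp add: algebra_simps)
qed

lemma has_reg_poly_diff:
  "has_reg_poly f p \<Longrightarrow> has_reg_poly g r \<Longrightarrow> has_reg_poly (\<lambda>N. f N - g N) (p - r)"
  using has_reg_poly_add[of f p "\<lambda>N. - g N" "- r"] has_reg_poly_mult_left[of g r "-1"] by simp

lemma has_reg_poly_mult:
  assumes f: "has_reg_poly f p" and g: "has_reg_poly g r"
  shows "has_reg_poly (\<lambda>N. f N * g N) (p * r)"
  unfolding has_reg_poly_def
proof
  fix q
  let ?a = "\<lambda>N. f N - poly p (harm_below N)" and ?b = "\<lambda>N. g N - poly r (harm_below N)"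
  have "(\<lambda>N. ?a N * (?b N * poly q (harm_below N)) + ?a N * poly (r * q) (harm_below N)
      + ?b N * poly (p * q) (harm_below N)) \<longlonglongrightarrow> 0 * 0 + 0 + 0"
    using f[unfolded has_reg_poly_def, rule_format, of "r * q"]
      g[unfolded has_reg_poly_def, rule_format, of "p * q"] g[unfolded has_reg_poly_def, rule_format, of q]
    by (intro tendsto_add tendsto_mult has_reg_poly_tendsto f) auto
  then show "(\<lambda>N. (f N * g N - poly (p * r) (harm_below N)) * poly q (harm_below N)) \<longlonglongrightarrow> 0"
    by (simp add: algebra_simps)
qed

lemma has_reg_poly_lin_real:
  assumes "\<And>c m. (c, m) \<in> set xs \<Longrightarrow> has_reg_poly (\<lambda>N. X N m) (P m)"
  shows "has_reg_poly (\<lambda>N. lin_real (X N) xs) (\<Sum>(c, m)\<leftarrow>xs. smult (of_rat c) (P m))"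
  using assms
proof (induction xs)
  case Nil
  then show ?case using has_reg_poly_poly[of 0] by (simp add: lin_real_def)
next
  case (Cons x xs)
  obtain c m where x: "x = (c, m)" by (cases x)
  have "has_reg_poly (\<lambda>N. of_rat c * X N m + lin_real (X N) xs)
      (smult (of_rat c) (P m) + (\<Sum>(c, m)\<leftarrow>xs. smult (of_rat c) (P m)))"
    using Cons by (intro has_reg_poly_add has_reg_poly_mult_left) (auto simp: x)
  then show ?case by (simp add: x lin_real_def)
qed

lemma harm_below_le_ln: "harm_below m \<le> 1 + ln (real m + 1)"
proof (cases m)
  case (Suc n)
  have "harm_below m = harm n" using Suc by (simp add: harm_below_Suc)
  also have "\<dots> \<le> harm (Suc n)" by (rule harm_mono) simp
  also have "\<dots> \<le> 1 + ln (real (Suc n))"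
    using euler_mascheroni_sequence_decreasing[of 1 "Suc n"] by (simp add: harm_def)
  also have "\<dots> \<le> 1 + ln (real m + 1)" using Suc by simp
  finally show ?thesis .
qed (simp add: harm_below_def)

lemma harm_below_power_le_sqrt: "\<exists>C. \<forall>m\<ge>1. (1 + harm_below m) ^ K \<le> C * real m powr (1/2)"
proof -
  define e :: real where "e = 1 / (2 * real K + 2)"
  have e0: "0 < e" by (simp add: e_def)
  define C where "C = (2 + 1 / e) ^ K * 2 powr (1/2)"
  have "(1 + harm_below m) ^ K \<le> C * real m powr (1/2)" if m: "m \<ge> 1" for m
  proof -
    define x where "x = real m + 1"
    have x1: "1 \<le> x" by (simp add: x_def)
    have xe: "1 \<le> x powr e" using x1 e0 by (intro ge_one_powr_ge_zero) auto
    have "ln x \<le> x powr e / e" using x1 e0 by (rule ln_powr_bound)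
    then have "1 + harm_below m \<le> (2 + 1 / e) * x powr e"
      using harm_below_le_ln[of m] xe by (simp add: x_def field_simps)
    then have "(1 + harm_below m) ^ K \<le> ((2 + 1 / e) * x powr e) ^ K"
      using harm_below_nonneg[of m] by (intro power_mono) auto
    also have "\<dots> = (2 + 1 / e) ^ K * x powr (real K * e)"
      using x1 by (simp add: power_mult_distrib powr_power)
    also have "x powr (real K * e) \<le> x powr (1/2)"
      using x1 by (intro powr_mono) (auto simp: e_def field_simps)
    also have "x powr (1/2) \<le> (2 * real m) powr (1/2)"
      using m by (intro powr_mono2) (auto simp: x_def)
    also have "\<dots> = 2 powr (1/2) * real m powr (1/2)" by (simp add: powr_mult)
    finally show ?thesis using e0 by (simp add: C_def mult_left_mono mult.assoc)
  qed
  then show ?thesis by blast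
qed

lemma suminf_tail_tendsto_zero:
  fixes f :: "nat \<Rightarrow> 'a::real_normed_vector"
  assumes "summable f"
  shows "(\<lambda>N. \<Sum>n. f (n + N)) \<longlonglongrightarrow> 0"
proof -
  have "(\<lambda>N. suminf f - (\<Sum>i<N. f i)) \<longlonglongrightarrow> suminf f - suminf f"
    by (intro tendsto_diff tendsto_const summable_LIMSEQ assms)
  then show ?thesis by (simp add: suminf_minus_initial_segment[OF assms])
qed

definition harm_majorant :: "nat \<Rightarrow> nat \<Rightarrow> real" where
  "harm_majorant K m = (1 + harm_below m) ^ K / real m ^ 2"

lemma harm_majorant_nonneg: "0 \<le> harm_majorant K m"
  unfolding harm_majorant_def using harm_below_nonneg[of m] by simp

lemma summable_harm_majorant: "summable (harm_majorant K)"
proof -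
  obtain C where C: "\<And>m. m \<ge> 1 \<Longrightarrow> (1 + harm_below m) ^ K \<le> C * real m powr (1/2)"
    using harm_below_power_le_sqrt[of K] by blast
  have "summable (\<lambda>m. C * real m powr (- 3 / 2))"
    by (intro summable_mult) (simp add: summable_real_powr_iff)
  then show ?thesis
  proof (rule summable_comparison_test')
    fix m :: nat assume m: "m \<ge> 1"
    have "real m powr (1/2) / real m ^ 2 = real m powr (1/2) / real m powr 2"
      using m by (simp add: powr_numeral)
    also have "\<dots> = real m powr (1/2 - 2)"
      by (rule powr_diff[symmetric])
    also have "\<dots> = real m powr (- 3 / 2)"
      by simp
    finally have "C * real m powr (1/2) / real m ^ 2 = C * real m powr (- 3 / 2)"
      by (simp only: times_divide_eq_right[symmetric])
    moreover have "(1 + harm_below m) ^ K / real m ^ 2 \<le> C * real m powr (1/2) / real m ^ 2"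
      using C[OF m] by (intro divide_right_mono) auto
    ultimately show "norm (harm_majorant K m) \<le> C * real m powr (- 3 / 2)"
      using harm_majorant_nonneg[of K m] unfolding harm_majorant_def by simp
  qed
qed

lemma mzv_trunc_nonneg: "0 \<le> mzv_trunc N r"
  by (induction r arbitrary: N) (auto intro!: sum_nonneg divide_nonneg_nonneg)

lemma mzv_trunc_le_harm_below_power: "is_index r \<Longrightarrow> mzv_trunc N r \<le> harm_below N ^ length r"
proof (induction r arbitrary: N)
  case (Cons b r)
  have "mzv_trunc N (b # r) \<le> (\<Sum>m\<in>{1..<N}. harm_below N ^ length r * (1 / real m))"
    unfolding mzv_trunc.simps
  proof (rule sum_mono)
    fix m assume m: "m \<in> {1..<N}"
    have "mzv_trunc m r \<le> harm_below N ^ length r"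
      using Cons m by (intro order_trans[OF Cons.IH] power_mono harm_below_mono harm_below_nonneg) auto
    moreover have "real m ^ 1 \<le> real m ^ b" using m Cons.prems by (intro power_increasing) auto
    ultimately show "mzv_trunc m r / real m ^ b \<le> harm_below N ^ length r * (1 / real m)"
      using m mzv_trunc_nonneg[of m r]
      by (simp add: frac_le)
  qed
  also have "\<dots> = harm_below N ^ length r * harm_below N"
    by (simp only: harm_below_def sum_distrib_left)
  also have "\<dots> = harm_below N ^ length (b # r)"
    by simp
  finally show ?case .
qed simp

lemma abs_poly_le:
  fixes q :: "real poly" and x :: real
  assumes "0 \<le> x"
  shows "\<bar>poly q x\<bar> \<le> (\<Sum>i\<le>degree q. \<bar>coeff q i\<bar>) * (1 + x) ^ degree q"
proof -
  have "\<bar>poly q x\<bar> \<le> (\<Sum>i\<le>degree q. \<bar>coeff q i * x ^ i\<bar>)"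
    unfolding poly_altdef by (rule sum_abs)
  also have "\<dots> \<le> (\<Sum>i\<le>degree q. \<bar>coeff q i\<bar> * (1 + x) ^ degree q)"
  proof (rule sum_mono)
    fix i assume "i \<in> {..degree q}"
    then have "x ^ i \<le> (1 + x) ^ degree q"
      using assms by (intro order_trans[OF power_mono power_increasing]) auto
    then show "\<bar>coeff q i * x ^ i\<bar> \<le> \<bar>coeff q i\<bar> * (1 + x) ^ degree q"
      using assms by (simp add: abs_mult mult_left_mono)
  qed
  also have "\<dots> = (\<Sum>i\<le>degree q. \<bar>coeff q i\<bar>) * (1 + x) ^ degree q" by (simp add: sum_distrib_right)
  finally show ?thesis .
qed

definition mzv_domain :: "nat list \<Rightarrow> nat list set" where
  "mzv_domain k = {n. length n = length k \<and> sorted_wrt (<) n \<and> (\<forall>x\<in>set n. 0 < x)}"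

definition mzv_domain_below :: "nat list \<Rightarrow> nat \<Rightarrow> nat list set" where
  "mzv_domain_below k N = {n \<in> mzv_domain k. \<forall>x\<in>set n. x < N}"

definition mzv_term :: "nat list \<Rightarrow> nat list \<Rightarrow> real" where
  "mzv_term k n = (\<Prod>i<length k. 1 / real (n ! i) ^ (k ! i))"

lemma mzv_term_nonneg: "0 \<le> mzv_term k n"
  unfolding mzv_term_def by (rule prod_nonneg) simp

lemma finite_mzv_domain_below: "finite (mzv_domain_below k N)"
proof (rule finite_subset)
  show "mzv_domain_below k N \<subseteq> {n. set n \<subseteq> {..<N} \<and> length n = length k}"
    unfolding mzv_domain_below_def mzv_domain_def by auto
qed (rule finite_lists_length_eq, simp)

lemma mzv_domain_below_snoc:
  "mzv_domain_below (k @ [a]) N = (\<lambda>(m, n). n @ [m]) ` (SIGMA m:{1..<N}. mzv_domain_below k m)"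
proof (rule set_eqI)
  fix x
  show "x \<in> mzv_domain_below (k @ [a]) N \<longleftrightarrow> x \<in> (\<lambda>(m, n). n @ [m]) ` (SIGMA m:{1..<N}. mzv_domain_below k m)"
  proof
    assume x: "x \<in> mzv_domain_below (k @ [a]) N"
    then obtain n m where "x = n @ [m]"
      by (cases x rule: rev_cases) (auto simp: mzv_domain_below_def mzv_domain_def)
    with x show "x \<in> (\<lambda>(m, n). n @ [m]) ` (SIGMA m:{1..<N}. mzv_domain_below k m)"
      by (auto simp: mzv_domain_below_def mzv_domain_def sorted_wrt_append image_iff)
  next
    assume "x \<in> (\<lambda>(m, n). n @ [m]) ` (SIGMA m:{1..<N}. mzv_domain_below k m)"
    then show "x \<in> mzv_domain_below (k @ [a]) N"
      by (auto simp: mzv_domain_below_def mzv_domain_def sorted_wrt_append) (metis less_trans)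
  qed
qed

lemma sum_mzv_term_below: "sum (mzv_term k) (mzv_domain_below k N) = mzv_trunc N (rev k)"
proof (induction k arbitrary: N rule: rev_induct)
  case Nil
  have "mzv_domain_below [] N = {[]}" by (auto simp: mzv_domain_below_def mzv_domain_def)
  then show ?case by (simp add: mzv_term_def)
next
  case (snoc a k)
  have inj: "inj_on (\<lambda>(m, n). n @ [m]) (SIGMA m:{1..<N}. mzv_domain_below k m)"
    by (auto simp: inj_on_def)
  have "sum (mzv_term (k @ [a])) (mzv_domain_below (k @ [a]) N) =
      (\<Sum>m\<in>{1..<N}. \<Sum>n\<in>mzv_domain_below k m. mzv_term (k @ [a]) (n @ [m]))"
    unfolding mzv_domain_below_snoc sum.reindex[OF inj]
    by (simp add: sum.Sigma finite_mzv_domain_below case_prod_unfold)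
  also have "\<dots> = (\<Sum>m\<in>{1..<N}. \<Sum>n\<in>mzv_domain_below k m. mzv_term k n * (1 / real m ^ a))"
    by (intro sum.cong refl)
      (simp add: mzv_term_def mzv_domain_below_def mzv_domain_def prod.lessThan_Suc nth_append)
  also have "\<dots> = mzv_trunc N (rev (k @ [a]))"
    by (simp add: snoc.IH[symmetric] sum_divide_distrib)
  finally show ?case .
qed

lemma subset_mzv_domain_below:
  assumes "finite X" "X \<subseteq> mzv_domain k" "(\<Sum>n\<in>X. sum_list n) < N"
  shows "X \<subseteq> mzv_domain_below k N"
proof
  fix n assume n: "n \<in> X"
  have "x < N" if "x \<in> set n" for x
  proof -
    have "x \<le> sum_list n" using that by (simp add: member_le_sum_list)
    also have "\<dots> \<le> (\<Sum>n\<in>X. sum_list n)" using assms n by (intro member_le_sum) auto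
    finally show "x < N" using assms by simp
  qed
  then show "n \<in> mzv_domain_below k N" using assms n by (auto simp: mzv_domain_below_def)
qed

lemma mzv_eq_lim:
  assumes lim: "(\<lambda>N. mzv_trunc N (rev k)) \<longlonglongrightarrow> T" and bound: "\<And>N. mzv_trunc N (rev k) \<le> T"
  shows "mzv k = T"
proof -
  have "bdd_above (sum (mzv_term k) ` {F. F \<subseteq> mzv_domain k \<and> finite F})"
  proof (rule bdd_aboveI2)
    fix F assume F: "F \<in> {F. F \<subseteq> mzv_domain k \<and> finite F}"
    then have "F \<subseteq> mzv_domain_below k (Suc (\<Sum>n\<in>F. sum_list n))"
      by (intro subset_mzv_domain_below) auto
    then have "sum (mzv_term k) F \<le> sum (mzv_term k) (mzv_domain_below k (Suc (\<Sum>n\<in>F. sum_list n)))"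
      by (intro sum_mono2 finite_mzv_domain_below mzv_term_nonneg)
    also have "\<dots> \<le> T" using bound by (simp add: sum_mzv_term_below)
    finally show "sum (mzv_term k) F \<le> T" .
  qed
  then have "mzv_term k summable_on mzv_domain k"
    by (intro nonneg_bdd_above_summable_on) (simp add: mzv_term_nonneg)
  then have "(sum (mzv_term k) \<longlongrightarrow> infsum (mzv_term k) (mzv_domain k)) (finite_subsets_at_top (mzv_domain k))"
    using has_sum_infsum by (simp add: has_sum_def)
  moreover have "filterlim (mzv_domain_below k) (finite_subsets_at_top (mzv_domain k)) sequentially"
    unfolding filterlim_finite_subsets_at_top
  proof (intro allI impI)
    fix X assume X: "finite X \<and> X \<subseteq> mzv_domain k"
    show "eventually (\<lambda>N. finite (mzv_domain_below k N) \<and> X \<subseteq> mzv_domain_below k N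
        \<and> mzv_domain_below k N \<subseteq> mzv_domain k) sequentially"
      unfolding eventually_sequentially
      using X subset_mzv_domain_below[of X k] finite_mzv_domain_below[of k]
      by (intro exI[of _ "Suc (\<Sum>n\<in>X. sum_list n)"]) (auto simp: mzv_domain_below_def)
  qed
  ultimately have "(\<lambda>N. sum (mzv_term k) (mzv_domain_below k N)) \<longlonglongrightarrow> infsum (mzv_term k) (mzv_domain k)"
    by (rule filterlim_compose)
  then have "infsum (mzv_term k) (mzv_domain k) = T"
    using lim by (simp add: sum_mzv_term_below LIMSEQ_unique)
  then show ?thesis unfolding mzv_def mzv_domain_def mzv_term_def .
qed

lemma mzv_trunc_Cons_eq_sum: "0 < a \<Longrightarrow> mzv_trunc N (a # r) = (\<Sum>m<N. mzv_trunc m r / real m ^ a)"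
  by (simp, rule sum.mono_neutral_left) auto

declare mzv_trunc.simps(2) [simp del]

lemma mzv_term_le_harm_majorant:
  assumes "2 \<le> a" "is_index r" "N \<le> m"
  shows "mzv_trunc m r / real m ^ a * (1 + harm_below N) ^ D \<le> harm_majorant (length r + D) m"
proof (cases "m = 0")
  case False
  have "mzv_trunc m r \<le> (1 + harm_below m) ^ length r"
    using assms(2) harm_below_nonneg[of m]
    by (intro order_trans[OF mzv_trunc_le_harm_below_power power_mono]) auto
  moreover have "(1 + harm_below N) ^ D \<le> (1 + harm_below m) ^ D"
    using assms(3) harm_below_nonneg[of N] by (intro power_mono harm_below_mono) (auto intro: harm_below_mono)
  moreover have "1 / real m ^ a \<le> 1 / real m ^ 2"
    using False assms(1) by (intro divide_left_mono power_increasing) auto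
  ultimately have "mzv_trunc m r * (1 / real m ^ a) * (1 + harm_below N) ^ D
      \<le> (1 + harm_below m) ^ length r * (1 / real m ^ 2) * (1 + harm_below m) ^ D"
    using harm_below_nonneg[of N] mzv_trunc_nonneg[of m r]
    by (intro mult_mono) (auto intro!: mult_nonneg_nonneg)
  then show ?thesis by (simp add: harm_majorant_def power_add)
qed (use assms(1) in \<open>simp add: harm_majorant_def power_0_left\<close>)

lemma mzv_admissible_sums:
  assumes "2 \<le> a" "is_index r"
  shows "(\<lambda>m. mzv_trunc m r / real m ^ a) sums mzv (rev (a # r))"
proof -
  let ?g = "\<lambda>m. mzv_trunc m r / real m ^ a"
  have "summable ?g"
  proof (rule summable_comparison_test'[OF summable_harm_majorant[of "length r"]])
    fix m :: nat
    show "norm (?g m) \<le> harm_majorant (length r) m"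
      using mzv_term_le_harm_majorant[OF assms, of 0 m 0] mzv_trunc_nonneg[of m r] by simp
  qed
  moreover have "mzv (rev (a # r)) = suminf ?g"
  proof (rule mzv_eq_lim)
    show "(\<lambda>N. mzv_trunc N (rev (rev (a # r)))) \<longlonglongrightarrow> suminf ?g"
      using summable_LIMSEQ[OF \<open>summable ?g\<close>] assms(1) by (simp add: mzv_trunc_Cons_eq_sum)
    show "mzv_trunc N (rev (rev (a # r))) \<le> suminf ?g" for N
      using \<open>summable ?g\<close> assms(1) mzv_trunc_nonneg
      by (simp add: mzv_trunc_Cons_eq_sum sum_le_suminf)
  qed
  ultimately show ?thesis by (simp add: summable_sums)
qed

lemma mzv_minus_mzv_trunc_bound:
  fixes N D :: nat
  assumes "2 \<le> a" "is_index r"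
  defines "\<delta> \<equiv> mzv (rev (a # r)) - mzv_trunc N (a # r)"
  shows "0 \<le> \<delta>" and "\<delta> * (1 + harm_below N) ^ D \<le> (\<Sum>n. harm_majorant (length r + D) (n + N))"
proof -
  let ?g = "\<lambda>m. mzv_trunc m r / real m ^ a"
  have sums: "?g sums mzv (rev (a # r))" by (rule mzv_admissible_sums[OF assms(1,2)])
  have tail: "\<delta> = (\<Sum>n. ?g (n + N))"
    using suminf_minus_initial_segment[OF sums_summable[OF sums], of N] sums_unique[OF sums] assms(1)
    by (simp add: \<delta>_def mzv_trunc_Cons_eq_sum)
  show "0 \<le> \<delta>"
    unfolding tail using summable_ignore_initial_segment[OF sums_summable[OF sums]] mzv_trunc_nonneg
    by (intro suminf_nonneg) auto
  have "\<delta> * (1 + harm_below N) ^ D = (\<Sum>n. ?g (n + N) * (1 + harm_below N) ^ D)"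
    unfolding tail using summable_ignore_initial_segment[OF sums_summable[OF sums]]
    by (rule suminf_mult2)
  also have "\<dots> \<le> (\<Sum>n. harm_majorant (length r + D) (n + N))"
  proof (rule suminf_le)
    show "?g (n + N) * (1 + harm_below N) ^ D \<le> harm_majorant (length r + D) (n + N)" for n
      by (rule mzv_term_le_harm_majorant[OF assms(1,2)]) simp
    show "summable (\<lambda>n. ?g (n + N) * (1 + harm_below N) ^ D)"
      by (rule summable_mult2, rule summable_ignore_initial_segment[OF sums_summable[OF sums]])
    show "summable (\<lambda>n. harm_majorant (length r + D) (n + N))"
      by (rule summable_ignore_initial_segment[OF summable_harm_majorant])
  qed
  finally show "\<delta> * (1 + harm_below N) ^ D \<le> (\<Sum>n. harm_majorant (length r + D) (n + N))" .
qed

lemma has_reg_poly_admissible: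
  assumes "2 \<le> a" "is_index r"
  shows "has_reg_poly (\<lambda>N. smzv_trunc N (a # r)) [:(-1) ^ length (a # r) * mzv (rev (a # r)):]"
  unfolding has_reg_poly_def
proof
  fix q :: "real poly"
  define A where "A = (\<Sum>i\<le>degree q. \<bar>coeff q i\<bar>)"
  define tail where "tail N = (\<Sum>n. harm_majorant (length r + degree q) (n + N))" for N
  have bound: "norm ((smzv_trunc N (a # r) - poly [:(-1) ^ length (a # r) * mzv (rev (a # r)):] (harm_below N))
      * poly q (harm_below N)) \<le> A * tail N" for N
  proof -
    let ?\<delta> = "mzv (rev (a # r)) - mzv_trunc N (a # r)"
    have "(smzv_trunc N (a # r) - poly [:(-1) ^ length (a # r) * mzv (rev (a # r)):] (harm_below N))
        * poly q (harm_below N) = (-1) ^ length (a # r) * (- ?\<delta> * poly q (harm_below N))"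
      by (simp add: smzv_trunc_def algebra_simps)
    then have "norm ((smzv_trunc N (a # r) - poly [:(-1) ^ length (a # r) * mzv (rev (a # r)):] (harm_below N))
        * poly q (harm_below N)) = ?\<delta> * \<bar>poly q (harm_below N)\<bar>"
      using mzv_minus_mzv_trunc_bound(1)[OF assms, of N] by (simp add: abs_mult power_abs)
    also have "\<dots> \<le> ?\<delta> * (A * (1 + harm_below N) ^ degree q)"
      using mzv_minus_mzv_trunc_bound(1)[OF assms, of N] abs_poly_le[OF harm_below_nonneg[of N], of q]
      by (intro mult_left_mono) (auto simp: A_def)
    also have "\<dots> \<le> A * tail N"
      using mzv_minus_mzv_trunc_bound(2)[OF assms, of N "degree q"]
      by (simp add: tail_def A_def mult.left_commute mult_left_mono sum_nonneg)
    finally show ?thesis .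
  qed
  have "(\<lambda>N. A * tail N) \<longlonglongrightarrow> 0"
    using tendsto_mult_left[OF suminf_tail_tendsto_zero[OF summable_harm_majorant], of A]
    by (simp add: tail_def)
  then show "(\<lambda>N. (smzv_trunc N (a # r) - poly [:(-1) ^ length (a # r) * mzv (rev (a # r)):] (harm_below N))
      * poly q (harm_below N)) \<longlonglongrightarrow> 0"
    by (rule Lim_null_comparison[rotated]) (rule always_eventually, rule allI, rule bound)
qed

section \<open>Reduction to admissible indices\<close>

text \<open>The number of trailing \<open>1\<close>s of the index \<open>rev r\<close>.\<close>
fun leading_ones :: "nat list \<Rightarrow> nat" where
  "leading_ones [] = 0"
| "leading_ones (x # r) = (if x = 1 then Suc (leading_ones r) else 0)"

lemma hpr_Cons_one:
  "hpr (a # k) [1] = (1, 1 # a # k) # map (\<lambda>(c, m). (c, a # m)) (hpr k [1]) @ [(-1, (a + 1) # k)]"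
  by (simp add: hpr.simps(3) hpr_Nil2)

definition hpr_one_rest :: "nat list \<Rightarrow> (rat \<times> nat list) list" where
  "hpr_one_rest w = filter (\<lambda>(c, m). m \<noteq> 1 # w) (hpr w [1])"

lemma leading_ones_hpr_one:
  "is_index w \<Longrightarrow> (c, m) \<in> set (hpr w [1]) \<Longrightarrow> m \<noteq> 1 # w \<Longrightarrow> leading_ones m \<le> leading_ones w"
proof (induction w arbitrary: c m)
  case (Cons a k)
  from Cons.prems(2) consider "m = 1 # a # k" | m' where "m = a # m'" "(c, m') \<in> set (hpr k [1])"
    | "m = (a + 1) # k"
    unfolding hpr_Cons_one by auto
  then show ?case
  proof cases
    case (2 m')
    then show ?thesis using Cons.IH[of c m'] Cons.prems by (cases "a = 1") auto
  qed (use Cons.prems in auto)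
qed simp

lemma hpr_one_rest_mem:
  assumes "is_index w" "(c, m) \<in> set (hpr_one_rest w)"
  shows "leading_ones m \<le> leading_ones w" "is_index m"
  using assms leading_ones_hpr_one[of w c m] is_index_hpr[of w "[1]" c m]
  by (auto simp: hpr_one_rest_def)

lemma sum_coeffs_hpr_one:
  "is_index w \<Longrightarrow> sum_list (map fst (filter (\<lambda>(c, m). m = 1 # w) (hpr w [1]))) = of_nat (Suc (leading_ones w))"
proof (induction w)
  case (Cons a k)
  have "filter (\<lambda>(c, m). m = 1 # a # k) (map (\<lambda>(c, m). (c, a # m)) (hpr k [1])) =
      map (\<lambda>(c, m). (c, a # m)) (filter (\<lambda>(c, m). a = 1 \<and> m = 1 # k) (hpr k [1]))"
    by (cases "a = 1") (auto simp: filter_map o_def case_prod_unfold intro!: filter_cong)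
  moreover have "map fst (map (\<lambda>(c, m). (c, a # m)) xs) = map fst xs" for xs :: "(rat \<times> nat list) list"
    by (induction xs) auto
  moreover have "a + 1 \<noteq> 1" using Cons.prems by simp
  ultimately have "sum_list (map fst (filter (\<lambda>(c, m). m = 1 # a # k) (hpr (a # k) [1]))) =
      1 + sum_list (map fst (filter (\<lambda>(c, m). a = 1 \<and> m = 1 # k) (hpr k [1])))"
    unfolding hpr_Cons_one by (simp add: case_prod_unfold o_def)
  then show ?case using Cons by (cases "a = 1") simp_all
qed simp

lemma sum_list_hpr_one:
  fixes f :: "rat \<Rightarrow> nat list \<Rightarrow> 'a::ab_group_add"
  assumes add: "\<And>c1 c2 m. f (c1 + c2) m = f c1 m + f c2 m" and "is_index w"
  shows "(\<Sum>(c, m)\<leftarrow>hpr w [1]. f c m) =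
    f (of_nat (Suc (leading_ones w))) (1 # w) + (\<Sum>(c, m)\<leftarrow>hpr_one_rest w. f c m)"
proof -
  have f0: "f 0 m = 0" for m using add[of 0 0 m] by simp
  have collect: "(\<Sum>(c, m)\<leftarrow>xs. f c m) = f (sum_list (map fst xs)) (1 # w)" if "\<forall>x\<in>set xs. snd x = 1 # w" for xs
    using that by (induction xs) (auto simp: f0 add)
  have split: "sum_list (map g xs) = sum_list (map g (filter P xs)) + sum_list (map g (filter (Not \<circ> P) xs))"
    for g :: "rat \<times> nat list \<Rightarrow> 'a" and P xs
    by (induction xs) (auto simp: algebra_simps)
  show ?thesis
    using split[where g="\<lambda>(c, m). f c m" and P="\<lambda>(c, m). m = 1 # w" and xs="hpr w [1]"]
      collect[of "filter (\<lambda>(c, m). m = 1 # w) (hpr w [1])"] sum_coeffs_hpr_one[OF \<open>is_index w\<close>]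
    by (auto simp: hpr_one_rest_def o_def case_prod_unfold)
qed

text \<open>Every index is reached from admissible ones and \<open>1\<close> by the relations
  \<open>e\<^sub>w * e\<^sub>1 = (j + 1) e\<^sub>w\<^sub>1 + (terms with at most j trailing 1s)\<close>, \<open>j\<close> the number of trailing 1s of \<open>w\<close>.\<close>
lemma leading_ones_induct [consumes 1, case_names Nil admissible one step]:
  assumes "is_index r"
    and "P []"
    and "\<And>a r. 2 \<le> a \<Longrightarrow> is_index r \<Longrightarrow> P (a # r)"
    and "P [1]"
    and "\<And>w. is_index w \<Longrightarrow> w \<noteq> [] \<Longrightarrow> P w \<Longrightarrow> (\<And>c m. (c, m) \<in> set (hpr_one_rest w) \<Longrightarrow> P m)
      \<Longrightarrow> P (1 # w)"
  shows "P r"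
  using assms(1)
proof (induction "leading_ones r" arbitrary: r rule: less_induct)
  case less
  show ?case
  proof (cases r)
    case (Cons a w)
    show ?thesis
    proof (cases "a = 1")
      case True
      have w: "is_index w" using less.prems Cons by simp
      show ?thesis
      proof (cases "w = []")
        case False
        have "P m" if "(c, m) \<in> set (hpr_one_rest w)" for c m
          using less.hyps[of m] hpr_one_rest_mem[OF w that] Cons True by simp
        moreover have "P w" using less.hyps[of w] w Cons True by simp
        ultimately show ?thesis using assms(5)[OF w False] Cons True by simp
      qed (use assms(4) Cons True in simp)
    next
      case False
      then show ?thesis using assms(3)[of a w] less.prems Cons by simp
    qed
  qed (use assms(2) in simp)
qed

lemma lin_real_hpr_one:
  assumes "is_index w"
  shows "lin_real X (hpr w [1]) = of_nat (Suc (leading_ones w)) * X (1 # w) + lin_real X (hpr_one_rest w)"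
  unfolding lin_real_def using sum_list_hpr_one[of "\<lambda>c m. of_rat c * X m", OF _ assms]
  by (simp add: of_rat_add algebra_simps)

lemma has_reg_poly_one: "has_reg_poly (\<lambda>N. smzv_trunc N [1]) [:0, -1:]"
  unfolding smzv_trunc_one using has_reg_poly_poly[of "[:0, -1:]"] by simp

lemma has_reg_poly_exists: "is_index r \<Longrightarrow> \<exists>p. has_reg_poly (\<lambda>N. smzv_trunc N r) p"
proof (induction r rule: leading_ones_induct)
  case Nil
  show ?case using has_reg_poly_poly[of 1] by auto
next
  case (admissible a r)
  then show ?case using has_reg_poly_admissible by blast
next
  case one
  show ?case using has_reg_poly_one by blast
next
  case (step w)
  define j where "j = leading_ones w"
  define P where "P m = (SOME p. has_reg_poly (\<lambda>N. smzv_trunc N m) p)" for m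
  have rest: "has_reg_poly (\<lambda>N. smzv_trunc N m) (P m)" if "(c, m) \<in> set (hpr_one_rest w)" for c m
    using step.IH(2)[OF that] unfolding P_def by (rule someI_ex)
  obtain pw where pw: "has_reg_poly (\<lambda>N. smzv_trunc N w) pw" using step.IH(1) by blast
  let ?X = "\<lambda>N. smzv_trunc N"
  have "(\<lambda>N. ?X N (1 # w)) =
      (\<lambda>N. (1 / of_nat (Suc j)) * (?X N w * ?X N [1] - lin_real (?X N) (hpr_one_rest w)))"
  proof (rule ext)
    fix N
    have "of_nat (Suc j) * ?X N (1 # w) + lin_real (?X N) (hpr_one_rest w) = ?X N w * ?X N [1]"
      using lin_real_hpr_one[OF step.hyps(1), of "?X N"] lin_real_smzv_trunc_hpr[of N w "[1]"]
      by (simp add: j_def)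
    then show "?X N (1 # w) = (1 / of_nat (Suc j)) * (?X N w * ?X N [1] - lin_real (?X N) (hpr_one_rest w))"
      by (simp add: field_simps)
  qed
  moreover have "has_reg_poly
      (\<lambda>N. (1 / of_nat (Suc j)) * (?X N w * ?X N [1] - lin_real (?X N) (hpr_one_rest w)))
      (smult (1 / of_nat (Suc j)) (pw * [:0, -1:] - (\<Sum>(c, m)\<leftarrow>hpr_one_rest w. smult (of_rat c) (P m))))"
    by (rule has_reg_poly_mult_left, rule has_reg_poly_diff, rule has_reg_poly_mult[OF pw has_reg_poly_one],
        rule has_reg_poly_lin_real, rule rest)
  ultimately show ?case by auto
qed

definition reg_poly :: "nat list \<Rightarrow> real poly" where
  "reg_poly r = (SOME p. has_reg_poly (\<lambda>N. smzv_trunc N r) p)"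

lemma has_reg_poly_reg_poly: "is_index r \<Longrightarrow> has_reg_poly (\<lambda>N. smzv_trunc N r) (reg_poly r)"
  unfolding reg_poly_def using has_reg_poly_exists by (rule someI_ex)

lemma reg_poly_eqI: "is_index r \<Longrightarrow> has_reg_poly (\<lambda>N. smzv_trunc N r) p \<Longrightarrow> reg_poly r = p"
  using has_reg_poly_reg_poly has_reg_poly_unique by blast

lemma reg_poly_Nil: "reg_poly [] = 1"
  using has_reg_poly_poly[of 1] by (intro reg_poly_eqI) simp_all

lemma reg_poly_one: "reg_poly [1] = [:0, -1:]"
  by (intro reg_poly_eqI has_reg_poly_one) simp

lemma reg_poly_admissible:
  "2 \<le> a \<Longrightarrow> is_index r \<Longrightarrow> reg_poly (a # r) = [:(-1) ^ length (a # r) * mzv (rev (a # r)):]"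
  by (intro reg_poly_eqI has_reg_poly_admissible) simp_all

lemma reg_poly_hpr:
  assumes "is_index r" "is_index s"
  shows "(\<Sum>(c, m)\<leftarrow>hpr r s. smult (of_rat c) (reg_poly m)) = reg_poly r * reg_poly s"
proof (rule has_reg_poly_unique)
  show "has_reg_poly (\<lambda>N. lin_real (smzv_trunc N) (hpr r s)) (\<Sum>(c, m)\<leftarrow>hpr r s. smult (of_rat c) (reg_poly m))"
    by (rule has_reg_poly_lin_real, rule has_reg_poly_reg_poly, rule is_index_hpr[OF assms])
  show "has_reg_poly (\<lambda>N. lin_real (smzv_trunc N) (hpr r s)) (reg_poly r * reg_poly s)"
    using has_reg_poly_mult[OF has_reg_poly_reg_poly[OF assms(1)] has_reg_poly_reg_poly[OF assms(2)]]
    by (simp add: lin_real_smzv_trunc_hpr)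
qed

section \<open>Existence and uniqueness of \<open>Z\<^sup>*\<close>\<close>

definition Zstar_spec :: "(nat list \<Rightarrow> real poly) \<Rightarrow> bool" where
  "Zstar_spec Z \<longleftrightarrow> (\<forall>k. \<not> is_index k \<longrightarrow> Z k = 0)
      \<and> Z [] = 1
      \<and> (\<forall>k. is_index k \<and> admissible k \<longrightarrow> Z k = (-1) ^ length k * [:mzv k:])
      \<and> Z [1] = - [:0, 1:]
      \<and> (\<forall>k l. is_index k \<and> is_index l \<longrightarrow> lin_poly Z (hp k l) = Z k * Z l)"

definition Zreg :: "nat list \<Rightarrow> real poly" where
  "Zreg k = (if is_index k then reg_poly (rev k) else 0)"

lemma lin_poly_hp:
  "lin_poly Z (hp k l) = (\<Sum>(c, m)\<leftarrow>hpr (rev k) (rev l). smult (of_rat c) (Z (rev m)))"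
  by (simp add: lin_poly_def hp_def case_prod_unfold o_def)

lemma mzv_Nil: "mzv [] = 1"
proof -
  have "{n::nat list. length n = 0 \<and> sorted_wrt (<) n \<and> (\<forall>x\<in>set n. 0 < x)} = {[]}" by auto
  then show ?thesis unfolding mzv_def by simp
qed

lemma pCons_neg_one_power_mult: "[:(-1) ^ n * x:] = (-1) ^ n * [:x::real:]"
  by (cases "even n") simp_all

lemma admissible_index_cases:
  assumes "is_index k" "admissible k"
  obtains "k = []" | a r where "k = rev (a # r)" "2 \<le> a" "is_index r"
proof (cases "rev k")
  case (Cons a r)
  then have k: "k = rev (a # r)" by (metis rev_rev_ident)
  moreover have "2 \<le> a" using assms(2) k by (simp add: admissible_def)
  moreover have "is_index r" using assms(1) k by (simp add: is_index_def)
  ultimately show ?thesis by (rule that(2))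
qed (use that(1) in simp)

lemma Zstar_spec_Zreg: "Zstar_spec Zreg"
  unfolding Zstar_spec_def
proof (intro conjI allI impI)
  fix k assume "\<not> is_index k" then show "Zreg k = 0" by (simp add: Zreg_def)
next
  show "Zreg [] = 1" by (simp add: Zreg_def reg_poly_Nil)
next
  fix k assume "is_index k \<and> admissible k"
  then have "is_index k" "admissible k" by simp_all
  then show "Zreg k = (-1) ^ length k * [:mzv k:]"
  proof (cases rule: admissible_index_cases)
    case 1
    then show ?thesis by (simp add: Zreg_def reg_poly_Nil mzv_Nil)
  next
    case (2 a r)
    then have "Zreg k = reg_poly (a # r)" using \<open>is_index k\<close> by (simp add: Zreg_def)
    also have "\<dots> = [:(-1) ^ length k * mzv k:]" using 2 by (simp only: reg_poly_admissible length_rev)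
    also have "\<dots> = (-1) ^ length k * [:mzv k:]" by (rule pCons_neg_one_power_mult)
    finally show ?thesis .
  qed
next
  show "Zreg [1] = - [:0, 1:]" unfolding Zreg_def using reg_poly_one by simp
next
  fix k l assume kl: "is_index k \<and> is_index l"
  have "lin_poly Zreg (hp k l) = (\<Sum>(c, m)\<leftarrow>hpr (rev k) (rev l). smult (of_rat c) (reg_poly m))"
    unfolding lin_poly_hp
    by (rule arg_cong[where f=sum_list], rule map_cong, simp)
      (use kl is_index_hpr[of "rev k" "rev l"] in \<open>auto simp: Zreg_def\<close>)
  also have "\<dots> = reg_poly (rev k) * reg_poly (rev l)"
    using kl by (intro reg_poly_hpr) simp_all
  finally show "lin_poly Zreg (hp k l) = Zreg k * Zreg l" using kl by (simp add: Zreg_def)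
qed

lemma sum_smult_hpr_one:
  assumes "is_index w"
  shows "(\<Sum>(c, m)\<leftarrow>hpr w [1]. smult (of_rat c) (F m)) =
    smult (of_nat (Suc (leading_ones w))) (F (1 # w)) + (\<Sum>(c, m)\<leftarrow>hpr_one_rest w. smult (of_rat c) (F m))"
  using sum_list_hpr_one[of "\<lambda>c m. smult (of_rat c) (F m)", OF _ assms]
  by (simp add: of_rat_add smult_add_left)

lemma Zstar_spec_unique:
  assumes Z: "Zstar_spec Z"
  shows "Z = Zreg"
proof
  have "Z (rev r) = reg_poly r" if "is_index r" for r
    using that
  proof (induction r rule: leading_ones_induct)
    case Nil
    then show ?case using Z by (simp add: Zstar_spec_def reg_poly_Nil)
  next
    case (admissible a r)
    then have "is_index (rev (a # r))" "admissible (rev (a # r))" by (simp_all add: admissible_def)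
    then have "Z (rev (a # r)) = (-1) ^ length (rev (a # r)) * [:mzv (rev (a # r)):]"
      using Z unfolding Zstar_spec_def by blast
    then show ?case
      using admissible by (simp only: reg_poly_admissible pCons_neg_one_power_mult length_rev)
  next
    case one
    then show ?case using Z reg_poly_one by (simp add: Zstar_spec_def)
  next
    case (step w)
    let ?j = "of_nat (Suc (leading_ones w)) :: real"
    let ?S = "\<lambda>F. \<Sum>(c, m)\<leftarrow>hpr_one_rest w. smult (of_rat c) (F m)"
    have rest: "?S (\<lambda>m. Z (rev m)) = ?S reg_poly"
      using step.IH(2) by (intro arg_cong[where f=sum_list] map_cong) auto
    have "lin_poly Z (hp (rev w) [1]) = Z (rev w) * Z [1]"
      using Z step.hyps(1) by (simp add: Zstar_spec_def)
    then have "smult ?j (Z (rev (1 # w))) + ?S (\<lambda>m. Z (rev m)) = reg_poly w * reg_poly [1]"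
      using Z step.IH(1) reg_poly_one sum_smult_hpr_one[OF step.hyps(1), of "\<lambda>m. Z (rev m)"]
      by (simp add: lin_poly_hp Zstar_spec_def)
    also have "\<dots> = smult ?j (reg_poly (1 # w)) + ?S reg_poly"
      using reg_poly_hpr[OF step.hyps(1), of "[1]"] sum_smult_hpr_one[OF step.hyps(1), of reg_poly] by simp
    finally have "smult ?j (Z (rev (1 # w))) = smult ?j (reg_poly (1 # w))" using rest by simp
    then show ?case by (rule smult_cancel[rotated]) simp
  qed
  then show "Z k = Zreg k" for k
    using Z unfolding Zstar_spec_def Zreg_def by (metis rev_rev_ident is_index_rev)
qed

lemma Zstar_eq_Zreg: "Zstar = Zreg"
  unfolding Zstar_def Zstar_spec_def[symmetric]
  using Zstar_spec_Zreg Zstar_spec_unique by (rule the_equality)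

lemma Zstar_hp: "is_index k \<Longrightarrow> is_index l \<Longrightarrow> lin_poly Zstar (hp k l) = Zstar k * Zstar l"
  using Zstar_spec_Zreg unfolding Zstar_eq_Zreg Zstar_spec_def by blast

lemma sum_list_rat_fps_const:
  "(\<Sum>(c, m)\<leftarrow>xs. rat_fps c * fps_const (g m)) = fps_const (\<Sum>(c, m)\<leftarrow>xs. smult (of_rat c) (g m))"
  by (induction xs) (auto simp: rat_fps_def fps_const_add fps_const_mult)

lemma hpr_comb_Zstar_fps:
  assumes "is_index u" "is_index v"
  shows "hpr_comb Zstar_fps u v = Zstar_fps u * Zstar_fps v"
proof -
  have "hpr_comb Zstar_fps u v = fps_const (lin_poly Zstar (hp (rev u) (rev v)))"
    unfolding hpr_comb_def Zstar_fps_def sum_list_rat_fps_const by (simp add: lin_poly_hp)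
  then show ?thesis using assms by (simp add: Zstar_hp Zstar_fps_def fps_const_mult)
qed

lemma shift_sum_Zstar_fps_hpr:
  assumes "is_index r" "is_index s"
  shows "(\<Sum>(c, m)\<leftarrow>hpr r s. rat_fps c * shift_sum Zstar_fps m) = shift_sum Zstar_fps r * shift_sum Zstar_fps s"
proof -
  have "(\<Sum>(c, m)\<leftarrow>hpr r s. rat_fps c * shift_sum Zstar_fps m)
      = shift_sum (\<lambda>u. shift_sum (\<lambda>v. hpr_comb Zstar_fps u v) s) r"
    by (rule shift_sum_hpr)
  also have "\<dots> = shift_sum (\<lambda>u. Zstar_fps u * shift_sum Zstar_fps s) r"
  proof (rule shift_sum_cong[OF assms(1)])
    fix u assume "is_index u"
    have "shift_sum (\<lambda>v. hpr_comb Zstar_fps u v) s = shift_sum (\<lambda>v. Zstar_fps u * Zstar_fps v) s"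
      by (rule shift_sum_cong[OF assms(2)]) (simp add: hpr_comb_Zstar_fps \<open>is_index u\<close>)
    then show "shift_sum (\<lambda>v. hpr_comb Zstar_fps u v) s = Zstar_fps u * shift_sum Zstar_fps s"
      by (simp add: shift_sum_mult_left)
  qed
  also have "\<dots> = shift_sum Zstar_fps r * shift_sum Zstar_fps s"
    using shift_sum_mult_left[of "shift_sum Zstar_fps s" Zstar_fps r] by (simp add: mult.commute)
  finally show ?thesis .
qed

lemma sum_list_rat_fps_compose:
  "(\<Sum>(c, m)\<leftarrow>xs. rat_fps c * F m) oo - fps_X = (\<Sum>(c, m)\<leftarrow>xs. rat_fps c * (F m oo - fps_X))"
  by (induction xs) (auto simp: fps_compose_add_distrib fps_compose_mult_distrib rat_fps_def)

lemma lin_shift_stuffle: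
  "lin_shift (stuffle k l) = fps_const ((-1) ^ (length k + length l)) *
     ((\<Sum>(c, m)\<leftarrow>hpr (rev k) (rev l). rat_fps c * shift_sum Zstar_fps m) oo - fps_X)"
proof -
  have sign: "fps_const [:of_rat ((-1) ^ (n + p) * c):] * (fps_const ((-1) ^ p) * F)
      = fps_const ((-1) ^ n) * (rat_fps c * F)" for n p c and F :: "real poly fps"
  proof -
    have "fps_const [:of_rat ((-1) ^ (n + p) * c):] = fps_const ((-1) ^ (n + p)) * rat_fps c"
      by (simp add: rat_fps_def of_rat_mult of_rat_power pCons_neg_one_power_mult fps_const_mult)
    moreover have "(-1 :: real poly fps) ^ (n + p) * (-1) ^ p = (-1) ^ n"
      by (simp add: power_add mult.assoc flip: power2_eq_square power_mult)
    ultimately show ?thesis by (simp add: fps_const_neg_one_power mult_ac)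
  qed
  show ?thesis
    unfolding lin_shift_def stuffle_def hp_def
    by (simp add: case_prod_unfold o_def zeta_shift_eq_shift_sum sign sum_list_const_mult
        sum_list_rat_fps_compose[unfolded case_prod_unfold])
qed

theorem corollary2p5:
  fixes k l :: "nat list"
  assumes "is_index k" and "is_index l"
  shows "lin_shift (stuffle k l) = zeta_shift k * zeta_shift l"
proof -
  have "lin_shift (stuffle k l) = fps_const ((-1) ^ (length k + length l)) *
      ((shift_sum Zstar_fps (rev k) * shift_sum Zstar_fps (rev l)) oo - fps_X)"
    using assms by (simp add: lin_shift_stuffle shift_sum_Zstar_fps_hpr)
  also have "\<dots> = zeta_shift k * zeta_shift l"
    by (simp add: zeta_shift_eq_shift_sum fps_compose_mult_distrib power_add fps_const_mult mult_ac)
  finally show ?thesis .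
qed

end
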